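(* Let $J^\star$ be the optimal cost function of the belief MDP with true parameter $\bm{\theta}$, $\overline{J}^\star$ that of the belief MDP with conjectured parameter $\overline{\bm{\theta}}$, and $\tilde J(\mathbf{b})=V^\star(\Phi(\mathbf{b}))$ the quantized approximation built from the conjectured model (see context). Suppose $\alpha\in[0,2]$ satisfies $\sum_{\mathbf{b}'\in\mathcal{B}}|p_{\bm{\theta}}(\mathbf{b}'\mid\mathbf{b},a)-p_{\overline{\bm{\theta}}}(\mathbf{b}'\mid\mathbf{b},a)|\le\alpha$ for all $\mathbf{b}\in\mathcal{B},a\in\mathcal{A}$. Let $c_{\max}=\max_{\mathbf{b}\in\mathcal{B},a\in\mathcal{A}}\hat c(\mathbf{b},a)$ and $\epsilon=\max_{\tilde{\mathbf{b}}\in\tilde{\mathcal{B}}}\sup_{\mathbf{b},\mathbf{b}'\in S_{\tilde{\mathbf{b}}}}|\overline{J}^\star(\mathbf{b})-\overline{J}^\star(\mathbf{b}')|$, where $S_{\tilde{\mathbf{b}}}=\{\mathbf{b}\in\mathcal{B}:\Phi(\mathbf{b})=\tilde{\mathbf{b}}\}$. Then $$\|\tilde J-J^\star\|_\infty\le\frac{\epsilon}{1-\gamma}+\frac{\gamma\alpha c_{\max}}{(1-\gamma)^2}.$$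
   Context: A POMDP has finite state space $\mathcal{S}=\{1,\dots,n\}$, finite action and observation spaces, costs $c(s,a)$ and discount factor $\gamma\in(0,1)$. Its belief MDP has state space $\mathcal{B}$ (the probability simplex over $\mathcal{S}$), cost $\hat c(\mathbf{b},a)=\sum_s\mathbf{b}(s)c(s,a)$, and belief transition probabilities $p_{\bm{\theta}'}(\mathbf{b}'\mid\mathbf{b},a)$ depending on a parameter vector $\bm{\theta}'$ (nonzero for finitely many $\mathbf{b}'$ given $\mathbf{b},a$). For $\bm{\theta}'\in\{\bm{\theta},\overline{\bm{\theta}}\}$ the optimal discounted cost function satisfies the Bellman equation $J(\mathbf{b})=\min_a[\hat c(\mathbf{b},a)+\gamma\sum_{\mathbf{b}'}p_{\bm{\theta}'}(\mathbf{b}'\mid\mathbf{b},a)J(\mathbf{b}')]$; these are $J^\star$ (for $\bm{\theta}$) and $\overline{J}^\star$ (for $\overline{\bm{\theta}}$). For a resolution $r\in\{1,2,\dots\}$, $\tilde{\mathcal{B}}=\{\tilde{\mathbf{b}}\in\mathcal{B}:\tilde{\mathbf{b}}(s)=\beta_s/r,\ \beta_s\in\{0,\dots,r\},\ \sum_s\beta_s=r\}$ and $\Phi(\mathbf{b})=\arg\min_{\tilde{\mathbf{b}}\in\tilde{\mathcal{B}}}\|\mathbf{b}-\tilde{\mathbf{b}}\|_\infty$ (ties broken consistently). The quantized MDP has state space $\tilde{\mathcal{B}}$, cost $\hat c$, transitions $\hat p_{\overline{\bm{\theta}}}(\tilde{\mathbf{b}}'\mid\tilde{\mathbf{b}},a)=\sum_{\mathbf{b}'}p_{\overline{\bm{\theta}}}(\mathbf{b}'\mid\tilde{\mathbf{b}},a)\delta_{\tilde{\mathbf{b}}'\Phi(\mathbf{b}')}$,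 discount $\gamma$, and optimal cost function $V^\star$. *)

theory Defs
  imports Complex_Main
begin

text \<open>States are indexed by a finite type 's (so n = CARD('s)); beliefs are functions 's => real.\<close>

definition belief_simplex :: "('s::finite \<Rightarrow> real) set" where
  "belief_simplex = {b. (\<forall>s. 0 \<le> b s) \<and> (\<Sum>s\<in>UNIV. b s) = 1}"

definition grid :: "nat \<Rightarrow> ('s::finite \<Rightarrow> real) set" where
  "grid r = {b \<in> belief_simplex. \<forall>s. \<exists>\<beta>::nat. \<beta> \<le> r \<and> b s = real \<beta> / real r}"

definition dist_inf :: "('s::finite \<Rightarrow> real) \<Rightarrow> ('s \<Rightarrow> real) \<Rightarrow> real" where
  "dist_inf b b' = Max (range (\<lambda>s. \<bar>b s - b' s\<bar>))"

definition is_quantizer :: "nat \<Rightarrow> (('s::finite \<Rightarrow> real) \<Rightarrow> ('s \<Rightarrow> real)) \<Rightarrow> bool" where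
  "is_quantizer r \<Phi> \<longleftrightarrow> (\<forall>b\<in>belief_simplex. \<Phi> b \<in> grid r \<and>
      (\<forall>bt\<in>grid r. dist_inf b (\<Phi> b) \<le> dist_inf b bt))"

definition chat :: "('s::finite \<Rightarrow> 'a \<Rightarrow> real) \<Rightarrow> ('s \<Rightarrow> real) \<Rightarrow> 'a \<Rightarrow> real" where
  "chat c b a = (\<Sum>s\<in>UNIV. b s * c s a)"

definition ksupp :: "(('s \<Rightarrow> real) \<Rightarrow> 'a \<Rightarrow> ('s \<Rightarrow> real) \<Rightarrow> real) \<Rightarrow> ('s \<Rightarrow> real) \<Rightarrow> 'a \<Rightarrow> ('s \<Rightarrow> real) set" where
  "ksupp p b a = {b'. p b a b' \<noteq> 0}"

definition is_belief_kernel :: "(('s::finite \<Rightarrow> real) \<Rightarrow> 'a \<Rightarrow> ('s \<Rightarrow> real) \<Rightarrow> real) \<Rightarrow> bool" where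
  "is_belief_kernel p \<longleftrightarrow> (\<forall>b\<in>belief_simplex. \<forall>a.
      finite (ksupp p b a) \<and> ksupp p b a \<subseteq> belief_simplex \<and>
      (\<forall>b'. 0 \<le> p b a b') \<and> (\<Sum>b'\<in>ksupp p b a. p b a b') = 1)"

definition expect :: "(('s \<Rightarrow> real) \<Rightarrow> 'a \<Rightarrow> ('s \<Rightarrow> real) \<Rightarrow> real) \<Rightarrow> ('s \<Rightarrow> real) \<Rightarrow> 'a \<Rightarrow> (('s \<Rightarrow> real) \<Rightarrow> real) \<Rightarrow> real" where
  "expect p b a f = (\<Sum>b'\<in>ksupp p b a. p b a b' * f b')"

definition is_optimal_cost :: "('s::finite \<Rightarrow> 'a::finite \<Rightarrow> real) \<Rightarrow> real \<Rightarrow> (('s \<Rightarrow> real) \<Rightarrow> 'a \<Rightarrow> ('s \<Rightarrow> real) \<Rightarrow> real) \<Rightarrow> (('s \<Rightarrow> real) \<Rightarrow> real) \<Rightarrow> bool" where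
  "is_optimal_cost c \<gamma> p J \<longleftrightarrow> (\<exists>M. \<forall>b\<in>belief_simplex. \<bar>J b\<bar> \<le> M) \<and>
     (\<forall>b\<in>belief_simplex. J b = Min (range (\<lambda>a. chat c b a + \<gamma> * expect p b a J)))"

definition phat :: "(('s \<Rightarrow> real) \<Rightarrow> 'a \<Rightarrow> ('s \<Rightarrow> real) \<Rightarrow> real) \<Rightarrow> (('s \<Rightarrow> real) \<Rightarrow> ('s \<Rightarrow> real)) \<Rightarrow> ('s \<Rightarrow> real) \<Rightarrow> 'a \<Rightarrow> ('s \<Rightarrow> real) \<Rightarrow> real" where
  "phat p \<Phi> bt a bt' = (\<Sum>b'\<in>ksupp p bt a. p bt a b' * (if \<Phi> b' = bt' then 1 else 0))"

definition is_quantized_optimal :: "('s::finite \<Rightarrow> 'a::finite \<Rightarrow> real) \<Rightarrow> real \<Rightarrow> (('s \<Rightarrow> real) \<Rightarrow> 'a \<Rightarrow> ('s \<Rightarrow> real) \<Rightarrow> real) \<Rightarrow> (('s \<Rightarrow> real) \<Rightarrow> ('s \<Rightarrow> real)) \<Rightarrow> nat \<Rightarrow> (('s \<Rightarrow> real) \<Rightarrow> real) \<Rightarrow> bool" where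
  "is_quantized_optimal c \<gamma> p \<Phi> r V \<longleftrightarrow> (\<forall>bt\<in>grid r.
     V bt = Min (range (\<lambda>a. chat c bt a + \<gamma> * (\<Sum>bt'\<in>grid r. phat p \<Phi> bt a bt' * V bt'))))"

end

theory Submission
  imports Defs
begin

(* All three value functions are bounded solutions of Bellman equations whose right-hand sides are
   \<gamma>-contractions in the sup norm, so the sup D of the error between two of them satisfies
   D \<le> \<gamma> D + \<delta>, i.e. D \<le> \<delta> / (1 - \<gamma>), where \<delta> is the one-step discrepancy.
   For J* against Jbar*, \<delta> comes from integrating Jbar* against two kernels at total variation
   distance \<alpha>; since 0 \<le> Jbar* \<le> cmax / (1 - \<gamma>), it is at most \<gamma> \<alpha> cmax / (1 - \<gamma>).
   For V* on the grid against Jbar*, \<delta> = \<gamma> \<epsilon>, because Jbar* varies by at most \<epsilon> on each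
   quantization cell; one more cell step gives \<epsilon> / (1 - \<gamma>) off the grid. *)

lemma SUP_contraction_bound:
  fixes g :: "'x \<Rightarrow> real"
  assumes "x \<in> S" "bdd_above (g ` S)" "\<gamma> < 1"
    and contraction: "\<And>x. x \<in> S \<Longrightarrow> g x \<le> \<gamma> * (SUP y\<in>S. g y) + K"
  shows "g x \<le> K / (1 - \<gamma>)"
proof -
  have "(SUP y\<in>S. g y) \<le> \<gamma> * (SUP y\<in>S. g y) + K"
    using contraction by (intro cSUP_least) (use assms(1) in auto)
  then have "(SUP y\<in>S. g y) \<le> K / (1 - \<gamma>)"
    using assms(3) by (simp add: pos_le_divide_eq algebra_simps)
  then show ?thesis
    using cSUP_upper[OF assms(1,2)] by linarith
qed

lemma Min_range_obtains:
  fixes F :: "'a::finite \<Rightarrow> 'b::linorder"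
  obtains a where "Min (range F) = F a"
proof -
  have "Min (range F) \<in> range F" by (intro Min_in) auto
  then show ?thesis using that by blast
qed

lemma abs_Min_range_diff_le:
  fixes F G :: "'a::finite \<Rightarrow> real"
  assumes "\<And>a. \<bar>F a - G a\<bar> \<le> d"
  shows "\<bar>Min (range F) - Min (range G)\<bar> \<le> d"
proof -
  obtain a1 a2 where a1: "Min (range F) = F a1" and a2: "Min (range G) = G a2"
    by (meson Min_range_obtains)
  have "Min (range F) \<le> F a2" "Min (range G) \<le> G a1" by auto
  then show ?thesis using assms[of a1] assms[of a2] a1 a2 by linarith
qed

lemma abs_Min_Bellman_diff_le:
  fixes u v :: "'a::finite \<Rightarrow> real"
  assumes "0 \<le> \<gamma>" "\<And>a. \<bar>u a - v a\<bar> \<le> d"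
  shows "\<bar>Min (range (\<lambda>a. c a + \<gamma> * u a)) - Min (range (\<lambda>a. c a + \<gamma> * v a))\<bar> \<le> \<gamma> * d"
proof (rule abs_Min_range_diff_le)
  fix a
  have "\<bar>c a + \<gamma> * u a - (c a + \<gamma> * v a)\<bar> = \<gamma> * \<bar>u a - v a\<bar>"
    using assms(1) by (simp add: abs_mult right_diff_distrib[symmetric])
  also have "\<dots> \<le> \<gamma> * d" using assms by (simp add: mult_left_mono)
  finally show "\<bar>c a + \<gamma> * u a - (c a + \<gamma> * v a)\<bar> \<le> \<gamma> * d" .
qed

lemma belief_simplex_nonempty: "(belief_simplex :: ('s::finite \<Rightarrow> real) set) \<noteq> {}"
proof -
  have "(\<lambda>s. if s = undefined then 1 else 0 :: real) \<in> belief_simplex"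
    unfolding belief_simplex_def by simp
  then show ?thesis by blast
qed

lemma belief_nonneg: "b \<in> belief_simplex \<Longrightarrow> 0 \<le> b s"
  by (simp add: belief_simplex_def)

lemma belief_le_1:
  assumes "b \<in> belief_simplex"
  shows "b s \<le> 1"
proof -
  have "b s \<le> (\<Sum>s\<in>UNIV. b s)"
    using assms by (intro member_le_sum) (auto simp: belief_nonneg)
  then show ?thesis using assms by (simp add: belief_simplex_def)
qed

lemma chat_nonneg:
  assumes "\<forall>s a. 0 \<le> c s a" "b \<in> belief_simplex"
  shows "0 \<le> chat c b a"
  unfolding chat_def using assms belief_nonneg by (intro sum_nonneg mult_nonneg_nonneg) auto

lemma bdd_above_chat:
  fixes c :: "'s::finite \<Rightarrow> 'a::finite \<Rightarrow> real"
  shows "bdd_above {chat c b a | b a. b \<in> belief_simplex}"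
proof (rule bdd_aboveI)
  fix x assume "x \<in> {chat c b a | b a. b \<in> belief_simplex}"
  then obtain b a where x: "x = chat c b a" and b: "b \<in> belief_simplex" by auto
  have "x \<le> (\<Sum>s\<in>UNIV. \<bar>c s a\<bar>)"
    unfolding x chat_def
  proof (rule sum_mono)
    fix s
    have "b s * c s a \<le> b s * \<bar>c s a\<bar>" using belief_nonneg[OF b] by (simp add: mult_left_mono)
    also have "\<dots> \<le> \<bar>c s a\<bar>" using belief_nonneg[OF b] belief_le_1[OF b]
      by (simp add: mult_left_le_one_le)
    finally show "b s * c s a \<le> \<bar>c s a\<bar>" .
  qed
  also have "\<dots> \<le> (\<Sum>s\<in>UNIV. \<Sum>a'\<in>UNIV. \<bar>c s a'\<bar>)"
    by (intro sum_mono member_le_sum) auto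
  finally show "x \<le> (\<Sum>s\<in>UNIV. \<Sum>a'\<in>UNIV. \<bar>c s a'\<bar>)" .
qed

lemma chat_le_Sup:
  fixes c :: "'s::finite \<Rightarrow> 'a::finite \<Rightarrow> real"
  assumes "b \<in> belief_simplex"
  shows "chat c b a \<le> Sup {chat c b a | b a. b \<in> belief_simplex}"
  using assms by (intro cSup_upper bdd_above_chat) blast

lemma belief_kernelD:
  assumes "is_belief_kernel p" "b \<in> belief_simplex"
  shows "finite (ksupp p b a)" "ksupp p b a \<subseteq> belief_simplex" "0 \<le> p b a b'"
    and "(\<Sum>b'\<in>ksupp p b a. p b a b') = 1"
  using assms unfolding is_belief_kernel_def by auto

lemma expect_uminus: "expect p b a (\<lambda>y. - f y) = - expect p b a f"
  unfolding expect_def by (simp add: sum_negf)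

lemma expect_diff: "expect p b a (\<lambda>y. f y - g y) = expect p b a f - expect p b a g"
  unfolding expect_def by (simp add: sum_subtractf right_diff_distrib)

lemma expect_le:
  assumes "is_belief_kernel p" "b \<in> belief_simplex" "\<And>y. y \<in> belief_simplex \<Longrightarrow> f y \<le> U"
  shows "expect p b a f \<le> U"
proof -
  note k = belief_kernelD[OF assms(1,2)]
  have "expect p b a f \<le> (\<Sum>b'\<in>ksupp p b a. p b a b' * U)"
    unfolding expect_def using k assms(3) by (intro sum_mono mult_left_mono) blast+
  also have "\<dots> = U" using k(4) by (simp add: sum_distrib_right[symmetric])
  finally show ?thesis .
qed

lemma abs_expect_le:
  assumes "is_belief_kernel p" "b \<in> belief_simplex" "\<And>y. y \<in> belief_simplex \<Longrightarrow> \<bar>f y\<bar> \<le> U"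
  shows "\<bar>expect p b a f\<bar> \<le> U"
proof -
  have "expect p b a f \<le> U" "expect p b a (\<lambda>y. - f y) \<le> U"
    using assms by (auto intro!: expect_le simp: abs_le_iff)
  then show ?thesis by (simp add: expect_uminus)
qed

lemma abs_expect_diff_kernels_le:
  assumes "is_belief_kernel p" "is_belief_kernel q" "b \<in> belief_simplex"
    and f_bound: "\<And>y. y \<in> belief_simplex \<Longrightarrow> \<bar>f y\<bar> \<le> K"
    and tv: "(\<Sum>b'\<in>ksupp p b a \<union> ksupp q b a. \<bar>p b a b' - q b a b'\<bar>) \<le> \<alpha>"
  shows "\<bar>expect p b a f - expect q b a f\<bar> \<le> \<alpha> * K"
proof -
  let ?U = "ksupp p b a \<union> ksupp q b a"
  note kp = belief_kernelD[OF assms(1,3)] and kq = belief_kernelD[OF assms(2,3)]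
  have "0 \<le> K" using f_bound belief_simplex_nonempty by (meson abs_ge_zero all_not_in_conv order_trans)
  have U: "finite ?U" "?U \<subseteq> belief_simplex" using kp kq by auto
  have "expect p b a f = (\<Sum>y\<in>?U. p b a y * f y)" "expect q b a f = (\<Sum>y\<in>?U. q b a y * f y)"
    unfolding expect_def using U(1) by (auto intro: sum.mono_neutral_left simp: ksupp_def)
  then have "\<bar>expect p b a f - expect q b a f\<bar> = \<bar>\<Sum>y\<in>?U. (p b a y - q b a y) * f y\<bar>"
    by (simp add: sum_subtractf left_diff_distrib)
  also have "\<dots> \<le> (\<Sum>y\<in>?U. \<bar>p b a y - q b a y\<bar> * K)"
    using U(2) f_bound by (intro order_trans[OF sum_abs] sum_mono) (auto simp: abs_mult mult_left_mono)
  also have "\<dots> \<le> \<alpha> * K"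
    using tv \<open>0 \<le> K\<close> by (simp add: sum_distrib_right[symmetric] mult_right_mono)
  finally show ?thesis .
qed

lemma finite_grid: "finite (grid r :: ('s::finite \<Rightarrow> real) set)"
proof -
  have "grid r \<subseteq> {f. \<forall>x. (x \<in> (UNIV::'s set) \<longrightarrow> f x \<in> (\<lambda>\<beta>. real \<beta> / real r) ` {..r}) \<and> (x \<notin> UNIV \<longrightarrow> f x = 0)}"
    unfolding grid_def by auto
  moreover have "finite \<dots>" by (rule finite_set_of_finite_funs) auto
  ultimately show ?thesis by (rule finite_subset)
qed

lemma grid_subset_belief_simplex: "grid r \<subseteq> belief_simplex"
  unfolding grid_def by auto

lemma quantizer_in_grid: "is_quantizer r \<Phi> \<Longrightarrow> b \<in> belief_simplex \<Longrightarrow> \<Phi> b \<in> grid r"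
  unfolding is_quantizer_def by blast

lemma quantizer_fixes_grid:
  assumes "is_quantizer r \<Phi>" "bt \<in> grid r"
  shows "\<Phi> bt = bt"
proof
  fix s
  have "bt \<in> belief_simplex" using assms(2) grid_subset_belief_simplex by blast
  then have "dist_inf bt (\<Phi> bt) \<le> dist_inf bt bt" using assms unfolding is_quantizer_def by blast
  also have "dist_inf bt bt = 0" unfolding dist_inf_def by simp
  finally have "\<bar>bt s - \<Phi> bt s\<bar> \<le> 0"
    unfolding dist_inf_def by (meson Max_ge finite_UNIV finite_imageI order_trans rangeI)
  then show "\<Phi> bt s = bt s" by simp
qed

lemma sum_phat_eq_expect:
  assumes "is_belief_kernel p" "bt \<in> belief_simplex" "is_quantizer r \<Phi>"
  shows "(\<Sum>bt'\<in>grid r. phat p \<Phi> bt a bt' * V bt') = expect p bt a (\<lambda>y. V (\<Phi> y))"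
proof -
  note k = belief_kernelD[OF assms(1,2)]
  have "(\<Sum>bt'\<in>grid r. phat p \<Phi> bt a bt' * V bt')
      = (\<Sum>b'\<in>ksupp p bt a. \<Sum>bt'\<in>grid r. if \<Phi> b' = bt' then p bt a b' * V bt' else 0)"
    unfolding phat_def sum_distrib_right by (subst sum.swap) (intro sum.cong refl; simp)
  also have "\<dots> = (\<Sum>b'\<in>ksupp p bt a. p bt a b' * V (\<Phi> b'))"
    using k(2) quantizer_in_grid[OF assms(3)] by (intro sum.cong refl) (auto simp: finite_grid)
  finally show ?thesis unfolding expect_def .
qed

lemma optimal_cost_Bellman:
  "is_optimal_cost c \<gamma> p J \<Longrightarrow> b \<in> belief_simplex \<Longrightarrow>
    J b = Min (range (\<lambda>a. chat c b a + \<gamma> * expect p b a J))"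
  unfolding is_optimal_cost_def by blast

lemma optimal_cost_bounded:
  assumes "is_optimal_cost c \<gamma> p J"
  obtains M where "\<And>b. b \<in> belief_simplex \<Longrightarrow> \<bar>J b\<bar> \<le> M"
  using assms unfolding is_optimal_cost_def by blast

lemma optimal_cost_nonneg:
  fixes c :: "'s::finite \<Rightarrow> 'a::finite \<Rightarrow> real"
  assumes J: "is_optimal_cost c \<gamma> p J" and "is_belief_kernel p" "0 \<le> \<gamma>" "\<gamma> < 1"
    and "\<forall>s a. 0 \<le> c s a" and "b \<in> belief_simplex"
  shows "0 \<le> J b"
proof -
  obtain M where "\<And>b. b \<in> belief_simplex \<Longrightarrow> \<bar>J b\<bar> \<le> M" using optimal_cost_bounded[OF J] by blast
  then have bdd: "bdd_above ((\<lambda>b. - J b) ` belief_simplex)"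
    by (intro bdd_aboveI2[where M = M]) (simp add: abs_le_iff)
  have "- J b \<le> 0 / (1 - \<gamma>)"
  proof (rule SUP_contraction_bound[OF \<open>b \<in> belief_simplex\<close> bdd \<open>\<gamma> < 1\<close>])
    fix x :: "'s \<Rightarrow> real" assume x: "x \<in> belief_simplex"
    obtain a where "Min (range (\<lambda>a. chat c x a + \<gamma> * expect p x a J)) = chat c x a + \<gamma> * expect p x a J"
      by (rule Min_range_obtains)
    then have a: "J x = chat c x a + \<gamma> * expect p x a J" using optimal_cost_Bellman[OF J x] by simp
    have "expect p x a (\<lambda>y. - J y) \<le> (SUP y\<in>belief_simplex. - J y)"
      using assms(2) x by (rule expect_le) (rule cSUP_upper[OF _ bdd])
    then have "\<gamma> * expect p x a (\<lambda>y. - J y) \<le> \<gamma> * (SUP y\<in>belief_simplex. - J y)"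
      using \<open>0 \<le> \<gamma>\<close> by (rule mult_left_mono)
    then show "- J x \<le> \<gamma> * (SUP y\<in>belief_simplex. - J y) + 0"
      using a chat_nonneg[OF assms(5) x, of a] by (simp add: expect_uminus)
  qed
  then show ?thesis by simp
qed

lemma optimal_cost_le:
  fixes c :: "'s::finite \<Rightarrow> 'a::finite \<Rightarrow> real"
  assumes J: "is_optimal_cost c \<gamma> p J" and "is_belief_kernel p" "0 \<le> \<gamma>" "\<gamma> < 1"
    and "\<And>b a. b \<in> belief_simplex \<Longrightarrow> chat c b a \<le> C" and "b \<in> belief_simplex"
  shows "J b \<le> C / (1 - \<gamma>)"
proof -
  obtain M where "\<And>b. b \<in> belief_simplex \<Longrightarrow> \<bar>J b\<bar> \<le> M" using optimal_cost_bounded[OF J] by blast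
  then have bdd: "bdd_above (J ` belief_simplex)"
    by (intro bdd_aboveI2[where M = M]) (simp add: abs_le_iff)
  show ?thesis
  proof (rule SUP_contraction_bound[OF \<open>b \<in> belief_simplex\<close> bdd \<open>\<gamma> < 1\<close>])
    fix x :: "'s \<Rightarrow> real" and a :: 'a assume x: "x \<in> belief_simplex"
    have "J x \<le> chat c x a + \<gamma> * expect p x a J"
      unfolding optimal_cost_Bellman[OF J x] by (rule Min_le) auto
    moreover have "expect p x a J \<le> (SUP y\<in>belief_simplex. J y)"
      using assms(2) x by (rule expect_le) (rule cSUP_upper[OF _ bdd])
    then have "\<gamma> * expect p x a J \<le> \<gamma> * (SUP y\<in>belief_simplex. J y)"
      using \<open>0 \<le> \<gamma>\<close> by (rule mult_left_mono)
    ultimately show "J x \<le> \<gamma> * (SUP y\<in>belief_simplex. J y) + C"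
      using assms(5)[OF x, of a] by linarith
  qed
qed

lemma optimal_cost_kernel_perturbation:
  fixes c :: "'s::finite \<Rightarrow> 'a::finite \<Rightarrow> real"
  assumes J: "is_optimal_cost c \<gamma> p J" and J': "is_optimal_cost c \<gamma> q J'"
    and p: "is_belief_kernel p" and q: "is_belief_kernel q" and "0 \<le> \<gamma>" "\<gamma> < 1"
    and J'_bound: "\<And>b. b \<in> belief_simplex \<Longrightarrow> \<bar>J' b\<bar> \<le> K"
    and tv: "\<And>b a. b \<in> belief_simplex \<Longrightarrow>
               (\<Sum>b'\<in>ksupp p b a \<union> ksupp q b a. \<bar>p b a b' - q b a b'\<bar>) \<le> \<alpha>"
    and "b \<in> belief_simplex"
  shows "\<bar>J b - J' b\<bar> \<le> \<gamma> * (\<alpha> * K) / (1 - \<gamma>)"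
proof -
  obtain M where M: "\<And>b. b \<in> belief_simplex \<Longrightarrow> \<bar>J b\<bar> \<le> M"
    using optimal_cost_bounded[OF J] by blast
  have "\<bar>J b - J' b\<bar> \<le> M + K" if "b \<in> belief_simplex" for b
    using M[OF that] J'_bound[OF that] by linarith
  then have bdd: "bdd_above ((\<lambda>b. \<bar>J b - J' b\<bar>) ` belief_simplex)"
    by (intro bdd_aboveI2[where M = "M + K"])
  let ?D = "SUP y\<in>belief_simplex. \<bar>J y - J' y\<bar>"
  show ?thesis
  proof (rule SUP_contraction_bound[OF \<open>b \<in> belief_simplex\<close> bdd \<open>\<gamma> < 1\<close>])
    fix x :: "'s \<Rightarrow> real" assume x: "x \<in> belief_simplex"
    have "\<bar>J x - J' x\<bar> \<le> \<gamma> * (?D + \<alpha> * K)"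
      unfolding optimal_cost_Bellman[OF J x] optimal_cost_Bellman[OF J' x]
    proof (rule abs_Min_Bellman_diff_le[OF \<open>0 \<le> \<gamma>\<close>])
      fix a
      have "\<bar>expect p x a (\<lambda>y. J y - J' y)\<bar> \<le> ?D"
        using p x by (rule abs_expect_le) (simp add: cSUP_upper[OF _ bdd])
      moreover have "\<bar>expect p x a J' - expect q x a J'\<bar> \<le> \<alpha> * K"
        using p q x J'_bound tv[OF x] by (rule abs_expect_diff_kernels_le)
      ultimately show "\<bar>expect p x a J - expect q x a J'\<bar> \<le> ?D + \<alpha> * K"
        unfolding expect_diff by linarith
    qed
    then show "\<bar>J x - J' x\<bar> \<le> \<gamma> * ?D + \<gamma> * (\<alpha> * K)" by (simp add: algebra_simps)
  qed
qed

lemma quantized_optimal_Bellman: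
  assumes "is_quantized_optimal c \<gamma> p \<Phi> r V" "is_belief_kernel p" "is_quantizer r \<Phi>" "bt \<in> grid r"
  shows "V bt = Min (range (\<lambda>a. chat c bt a + \<gamma> * expect p bt a (\<lambda>y. V (\<Phi> y))))"
proof -
  have "V bt = Min (range (\<lambda>a. chat c bt a + \<gamma> * (\<Sum>bt'\<in>grid r. phat p \<Phi> bt a bt' * V bt')))"
    using assms(1,4) unfolding is_quantized_optimal_def by blast
  moreover have "bt \<in> belief_simplex" using assms(4) grid_subset_belief_simplex by blast
  ultimately show ?thesis using assms(2,3) by (simp only: sum_phat_eq_expect)
qed

lemma quantized_optimal_grid_error:
  fixes c :: "'s::finite \<Rightarrow> 'a::finite \<Rightarrow> real"
  assumes V: "is_quantized_optimal c \<gamma> p \<Phi> r V" and J: "is_optimal_cost c \<gamma> p J"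
    and p: "is_belief_kernel p" and \<Phi>: "is_quantizer r \<Phi>" and "0 \<le> \<gamma>" "\<gamma> < 1"
    and osc: "\<And>b. b \<in> belief_simplex \<Longrightarrow> \<bar>J (\<Phi> b) - J b\<bar> \<le> \<epsilon>"
    and "bt \<in> grid r"
  shows "\<bar>V bt - J bt\<bar> \<le> \<gamma> * \<epsilon> / (1 - \<gamma>)"
proof -
  have bdd: "bdd_above ((\<lambda>bt. \<bar>V bt - J bt\<bar>) ` grid r)" by (simp add: finite_grid)
  let ?D = "SUP y\<in>grid r. \<bar>V y - J y\<bar>"
  show ?thesis
  proof (rule SUP_contraction_bound[OF \<open>bt \<in> grid r\<close> bdd \<open>\<gamma> < 1\<close>])
    fix x :: "'s \<Rightarrow> real" assume x: "x \<in> grid r"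
    then have xs: "x \<in> belief_simplex" using grid_subset_belief_simplex by blast
    have "\<bar>V x - J x\<bar> \<le> \<gamma> * (?D + \<epsilon>)"
      unfolding quantized_optimal_Bellman[OF V p \<Phi> x] optimal_cost_Bellman[OF J xs]
    proof (rule abs_Min_Bellman_diff_le[OF \<open>0 \<le> \<gamma>\<close>])
      fix a
      have "\<bar>V (\<Phi> y) - J y\<bar> \<le> ?D + \<epsilon>" if "y \<in> belief_simplex" for y
        using cSUP_upper[OF quantizer_in_grid[OF \<Phi> that] bdd] osc[OF that] by linarith
      then show "\<bar>expect p x a (\<lambda>y. V (\<Phi> y)) - expect p x a J\<bar> \<le> ?D + \<epsilon>"
        unfolding expect_diff[symmetric] by (rule abs_expect_le[OF p xs])
    qed
    then show "\<bar>V x - J x\<bar> \<le> \<gamma> * ?D + \<gamma> * \<epsilon>" by (simp add: algebra_simps)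
  qed
qed

lemma quantized_optimal_error:
  fixes c :: "'s::finite \<Rightarrow> 'a::finite \<Rightarrow> real"
  assumes V: "is_quantized_optimal c \<gamma> p \<Phi> r V" and J: "is_optimal_cost c \<gamma> p J"
    and p: "is_belief_kernel p" and \<Phi>: "is_quantizer r \<Phi>" and "0 \<le> \<gamma>" "\<gamma> < 1"
    and osc: "\<And>b. b \<in> belief_simplex \<Longrightarrow> \<bar>J (\<Phi> b) - J b\<bar> \<le> \<epsilon>"
    and b: "b \<in> belief_simplex"
  shows "\<bar>V (\<Phi> b) - J b\<bar> \<le> \<epsilon> / (1 - \<gamma>)"
proof -
  have "\<bar>V (\<Phi> b) - J (\<Phi> b)\<bar> \<le> \<gamma> * \<epsilon> / (1 - \<gamma>)"
    by (rule quantized_optimal_grid_error[OF V J p \<Phi> assms(5,6) osc quantizer_in_grid[OF \<Phi> b]])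
  then have "\<bar>V (\<Phi> b) - J b\<bar> \<le> \<gamma> * \<epsilon> / (1 - \<gamma>) + \<epsilon>" using osc[OF b] by linarith
  also have "\<dots> = \<epsilon> / (1 - \<gamma>)" using \<open>\<gamma> < 1\<close> by (simp add: field_simps)
  finally show ?thesis .
qed

definition quantization_oscillation ::
    "nat \<Rightarrow> (('s::finite \<Rightarrow> real) \<Rightarrow> ('s \<Rightarrow> real)) \<Rightarrow> (('s \<Rightarrow> real) \<Rightarrow> real) \<Rightarrow> real" where
  "quantization_oscillation r \<Phi> J = Max ((\<lambda>bt. SUP bb\<in>{b \<in> belief_simplex. \<Phi> b = bt} \<times> {b \<in> belief_simplex. \<Phi> b = bt}.
      \<bar>J (fst bb) - J (snd bb)\<bar>) ` grid r)"

lemma abs_quantization_error_le_oscillation: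
  assumes \<Phi>: "is_quantizer r \<Phi>" and J_bound: "\<And>b. b \<in> belief_simplex \<Longrightarrow> \<bar>J b\<bar> \<le> M"
    and b: "b \<in> belief_simplex"
  shows "\<bar>J (\<Phi> b) - J b\<bar> \<le> quantization_oscillation r \<Phi> J"
proof -
  let ?S = "{y \<in> belief_simplex. \<Phi> y = \<Phi> b}"
  let ?osc = "\<lambda>bb. \<bar>J (fst bb) - J (snd bb)\<bar>"
  have bt: "\<Phi> b \<in> grid r" using \<Phi> b by (rule quantizer_in_grid)
  then have mem: "(\<Phi> b, b) \<in> ?S \<times> ?S"
    using quantizer_fixes_grid[OF \<Phi> bt] grid_subset_belief_simplex b by auto
  have "\<bar>J u - J v\<bar> \<le> M + M" if "u \<in> belief_simplex" "v \<in> belief_simplex" for u v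
    using J_bound[OF that(1)] J_bound[OF that(2)] by linarith
  then have bdd: "bdd_above (?osc ` (?S \<times> ?S))" by (intro bdd_aboveI2[where M = "M + M"]) auto
  have "\<bar>J (\<Phi> b) - J b\<bar> = ?osc (\<Phi> b, b)" by simp
  also have "\<dots> \<le> (SUP bb\<in>?S \<times> ?S. ?osc bb)" using mem bdd by (rule cSUP_upper)
  also have "\<dots> \<le> quantization_oscillation r \<Phi> J"
    unfolding quantization_oscillation_def using bt by (intro Max_ge finite_imageI finite_grid imageI)
  finally show ?thesis .
qed

theorem theorem4p5:
  fixes c :: "'s::finite \<Rightarrow> 'a::finite \<Rightarrow> real"
    and p :: "'t \<Rightarrow> ('s \<Rightarrow> real) \<Rightarrow> 'a \<Rightarrow> ('s \<Rightarrow> real) \<Rightarrow> real"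
    and \<theta> \<theta>bar :: 't
    and \<gamma> \<alpha> :: real and r :: nat
    and \<Phi> :: "('s \<Rightarrow> real) \<Rightarrow> ('s \<Rightarrow> real)"
    and J Jbar V :: "('s \<Rightarrow> real) \<Rightarrow> real"
  assumes "0 < \<gamma>" "\<gamma> < 1"
    and "\<forall>s a. 0 \<le> c s a"
    and "is_belief_kernel (p \<theta>)" "is_belief_kernel (p \<theta>bar)"
    and "is_optimal_cost c \<gamma> (p \<theta>) J"
    and "is_optimal_cost c \<gamma> (p \<theta>bar) Jbar"
    and "1 \<le> r" "is_quantizer r \<Phi>"
    and "is_quantized_optimal c \<gamma> (p \<theta>bar) \<Phi> r V"
    and "0 \<le> \<alpha>" "\<alpha> \<le> 2"
    and "\<forall>b\<in>belief_simplex. \<forall>a.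
           (\<Sum>b'\<in>ksupp (p \<theta>) b a \<union> ksupp (p \<theta>bar) b a. \<bar>p \<theta> b a b' - p \<theta>bar b a b'\<bar>) \<le> \<alpha>"
  shows "let cmax = Sup {chat c b a | b a. b \<in> belief_simplex};
             S = (\<lambda>bt. {b \<in> belief_simplex. \<Phi> b = bt});
             eps = Max ((\<lambda>bt. SUP bb\<in>S bt \<times> S bt. \<bar>Jbar (fst bb) - Jbar (snd bb)\<bar>) ` grid r)
         in \<forall>b\<in>belief_simplex. \<bar>V (\<Phi> b) - J b\<bar> \<le> eps / (1 - \<gamma>) + \<gamma> * \<alpha> * cmax / (1 - \<gamma>)^2"
proof -
  define cmax where "cmax = Sup {chat c b a | b a. b \<in> belief_simplex}"
  define K where "K = cmax / (1 - \<gamma>)"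
  have "0 \<le> \<gamma>" using assms(1) by simp
  have Jbar_bound: "\<bar>Jbar b\<bar> \<le> K" if "b \<in> belief_simplex" for b
    using optimal_cost_nonneg[OF assms(7,5) \<open>0 \<le> \<gamma>\<close> assms(2,3) that]
      optimal_cost_le[OF assms(7,5) \<open>0 \<le> \<gamma>\<close> assms(2) chat_le_Sup that]
    unfolding K_def cmax_def by simp
  have "\<bar>V (\<Phi> b) - J b\<bar> \<le> quantization_oscillation r \<Phi> Jbar / (1 - \<gamma>) + \<gamma> * (\<alpha> * K) / (1 - \<gamma>)"
    if b: "b \<in> belief_simplex" for b
  proof -
    have "\<bar>V (\<Phi> b) - Jbar b\<bar> \<le> quantization_oscillation r \<Phi> Jbar / (1 - \<gamma>)"
      using abs_quantization_error_le_oscillation[OF assms(9) Jbar_bound]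
      by (rule quantized_optimal_error[OF assms(10,7,5,9) \<open>0 \<le> \<gamma>\<close> assms(2) _ b])
    moreover have "\<bar>J b - Jbar b\<bar> \<le> \<gamma> * (\<alpha> * K) / (1 - \<gamma>)"
      using assms(13) by (intro optimal_cost_kernel_perturbation[OF assms(6,7,4,5) \<open>0 \<le> \<gamma>\<close> assms(2) Jbar_bound _ b]) auto
    ultimately show ?thesis by linarith
  qed
  moreover have "\<gamma> * (\<alpha> * K) / (1 - \<gamma>) = \<gamma> * \<alpha> * cmax / (1 - \<gamma>)\<^sup>2"
    using assms(2) by (simp add: K_def field_simps power2_eq_square)
  ultimately show ?thesis
    unfolding Let_def quantization_oscillation_def cmax_def by simp
qed

end
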